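(* Let $H$ be a poly-$\mathbb{Z}$ group, $A$ an $n\times n$ matrix over $\mathbb{Z}H$, and $f_A:\mathbb{Z}H^n\to\mathbb{Z}H^n$ the homomorphism of free $\mathbb{Z}H$-modules given by left multiplication by $A$ on columns. If the induced map $(\mathbb{Z}H/\Delta(H))^n\cong\mathbb{Z}^n\to\mathbb{Z}^n$, which is left multiplication by $\varepsilon(A)$, is injective, then $f_A$ is injective.
   Context: A group is poly-$\mathbb{Z}$ if it has a subnormal series all of whose factors are infinite cyclic. $\varepsilon:\mathbb{Z}H\to\mathbb{Z}$, $\sum n_ih_i\mapsto\sum n_i$, is the augmentation map, $\Delta(H)$ its kernel, and $\varepsilon(A)$ denotes the integer matrix obtained by applying $\varepsilon$ to each entry of $A$. *)

theory Defs
  imports "HOL-Algebra.Algebra"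
begin

definition poly_Z :: "('a, 'b) monoid_scheme \<Rightarrow> bool" where
  "poly_Z G \<longleftrightarrow> (\<exists>(k::nat) (S :: nat \<Rightarrow> 'a set).
      S 0 = {\<one>\<^bsub>G\<^esub>} \<and> S k = carrier G \<and>
      (\<forall>i\<le>k. subgroup (S i) G) \<and>
      (\<forall>i<k. S i \<subseteq> S (Suc i) \<and>
             normal (S i) (G\<lparr>carrier := S (Suc i)\<rparr>) \<and>
             ((G\<lparr>carrier := S (Suc i)\<rparr>) Mod (S i)) \<cong> integer_group))"

definition group_ring :: "('a, 'b) monoid_scheme \<Rightarrow> ('a \<Rightarrow> int) set" where
  "group_ring G = {a. finite {g. a g \<noteq> 0} \<and> (\<forall>g. a g \<noteq> 0 \<longrightarrow> g \<in> carrier G)}"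

text \<open>Multiplication in ZH (convolution); addition is pointwise, zero is \<open>\<lambda>_. 0\<close>.\<close>
definition gr_mult :: "('a, 'b) monoid_scheme \<Rightarrow> ('a \<Rightarrow> int) \<Rightarrow> ('a \<Rightarrow> int) \<Rightarrow> ('a \<Rightarrow> int)" where
  "gr_mult G a b = (\<lambda>x. \<Sum>(g, h) \<in> {g. a g \<noteq> 0} \<times> {h. b h \<noteq> 0}.
                        if g \<otimes>\<^bsub>G\<^esub> h = x then a g * b h else 0)"

definition augmentation :: "('a \<Rightarrow> int) \<Rightarrow> int" where
  "augmentation a = (\<Sum>g \<in> {g. a g \<noteq> 0}. a g)"

text \<open>Left multiplication of a column vector in ZH^n by an n x n matrix over ZH
 (vectors/matrices are functions on indices, zero outside the range).\<close>
definition gr_mat_apply :: "('a, 'b) monoid_scheme \<Rightarrow> nat \<Rightarrow> (nat \<Rightarrow> nat \<Rightarrow> ('a \<Rightarrow> int))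
      \<Rightarrow> (nat \<Rightarrow> ('a \<Rightarrow> int)) \<Rightarrow> (nat \<Rightarrow> ('a \<Rightarrow> int))" where
  "gr_mat_apply G n A v = (\<lambda>i. if i < n then (\<lambda>x. \<Sum>j<n. gr_mult G (A i j) (v j) x) else (\<lambda>_. 0))"

definition int_mat_apply :: "nat \<Rightarrow> (nat \<Rightarrow> nat \<Rightarrow> int) \<Rightarrow> (nat \<Rightarrow> int) \<Rightarrow> (nat \<Rightarrow> int)" where
  "int_mat_apply n M x = (\<lambda>i. if i < n then (\<Sum>j<n. M i j * x j) else 0)"

end

theory Submission
  imports Defs
begin

text \<open>
  A free right \<open>H\<close>-set \<open>W\<close> spans the free \<open>\<int>H\<close>-module \<open>\<int>[W]\<close>; \<open>\<int>H\<^sup>n = \<int>[{..<n} \<times> H]\<close>, and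
  \<open>f\<^sub>A\<close> is given by an \<open>H\<close>-equivariant kernel. For a subgroup \<open>K\<close>, such a map induces
  \<open>\<int>[W/K] \<rightarrow> \<int>[W'/K]\<close> on \<open>K\<close>-orbit sums; for \<open>K = H\<close> this is \<open>\<epsilon>(A)\<close>, for \<open>K = 1\<close> it is
  \<open>f\<^sub>A\<close> itself. So it suffices to pass injectivity down a poly-\<open>\<int>\<close> series, from \<open>L\<close> to
  \<open>K \<lhd> L\<close> with \<open>L/K\<close> infinite cyclic, generated by \<open>t\<close>.

  Then \<open>\<int>[W/K]\<close> is a module over \<open>\<int>[t, t\<^sup>-\<^sup>1]\<close> whose reduction modulo \<open>t - 1\<close> is
  \<open>\<int>[W/L]\<close>. If \<open>F v\<close> has vanishing \<open>K\<close>-orbit sums, it has vanishing \<open>L\<close>-orbit sums, hence so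
  has \<open>v\<close>, and \<open>v\<close> is \<open>(t - 1) d\<close> up to \<open>K\<close>-orbit sums. The \<open>K\<close>-orbit sums of \<open>F d\<close> are
  then \<open>t\<close>-invariant and finitely supported, hence zero, and induction on the spread of the
  heights of \<open>v\<close> in \<open>L/K \<cong> \<int>\<close> applies to \<open>d\<close>.
\<close>

section \<open>Infinite cyclic quotients\<close>


locale infinite_cyclic_quotient = group H for H :: "('a, 'b) monoid_scheme" (structure) +
  fixes K L :: "'a set" and \<phi> :: "'a \<Rightarrow> int"
  assumes subgroup_L: "subgroup L H"
    and K_subset_L: "K \<subseteq> L"
    and phi_mult: "a \<in> L \<Longrightarrow> b \<in> L \<Longrightarrow> \<phi> (a \<otimes> b) = \<phi> a + \<phi> b"
    and phi_eq_0_iff: "a \<in> L \<Longrightarrow> \<phi> a = 0 \<longleftrightarrow> a \<in> K"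
    and phi_surj: "\<exists>a\<in>L. \<phi> a = m"

context infinite_cyclic_quotient
begin

definition lift :: "int \<Rightarrow> 'a" where
  "lift m = (SOME l. l \<in> L \<and> \<phi> l = m)"

lemma lift: "lift m \<in> L" "\<phi> (lift m) = m"
  using someI_ex[OF phi_surj[of m, unfolded Bex_def]] by (simp_all add: lift_def)

lemma L_carrier: "l \<in> L \<Longrightarrow> l \<in> carrier H"
  using subgroup.subset[OF subgroup_L] by blast

lemma phi_one: "\<phi> \<one> = 0"
  using phi_mult[OF subgroup.one_closed[OF subgroup_L] subgroup.one_closed[OF subgroup_L]]
  by simp

lemma phi_inv: "l \<in> L \<Longrightarrow> \<phi> (inv l) = - \<phi> l"
  using phi_mult[OF _ subgroup.m_inv_closed[OF subgroup_L]] phi_one L_carrier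
  by (metis add_eq_0_iff r_inv)

lemma subgroup_K: "subgroup K H"
proof (rule subgroupI)
  show "K \<subseteq> carrier H"
    using K_subset_L L_carrier by blast
  show "K \<noteq> {}"
    using phi_eq_0_iff[OF subgroup.one_closed[OF subgroup_L]] phi_one by blast
  show "inv k \<in> K" if "k \<in> K" for k
  proof -
    have k: "k \<in> L"
      using that K_subset_L by blast
    then have "\<phi> (inv k) = 0"
      using that phi_inv phi_eq_0_iff by simp
    then show ?thesis
      using phi_eq_0_iff subgroup.m_inv_closed[OF subgroup_L k] by blast
  qed
  show "k \<otimes> k' \<in> K" if "k \<in> K" "k' \<in> K" for k k'
  proof -
    have kk': "k \<in> L" "k' \<in> L"
      using that K_subset_L by blast+
    then have "\<phi> (k \<otimes> k') = 0"
      using that phi_mult[OF kk'] phi_eq_0_iff[OF kk'(1)] phi_eq_0_iff[OF kk'(2)] by simp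
    then show ?thesis
      using phi_eq_0_iff subgroup.m_closed[OF subgroup_L kk'] by blast
  qed
qed

end

lemma infinite_cyclic_quotientI:
  assumes "group H" "subgroup L H" "normal K (H\<lparr>carrier := L\<rparr>)"
    and "(H\<lparr>carrier := L\<rparr> Mod K) \<cong> integer_group"
  obtains \<phi> where "infinite_cyclic_quotient H K L \<phi>"
proof -
  let ?L = "H\<lparr>carrier := L\<rparr>"
  interpret L: normal K ?L by fact
  obtain h where h: "h \<in> hom (?L Mod K) integer_group" "bij_betw h (carrier (?L Mod K)) UNIV"
    using assms(4) unfolding is_iso_def iso_def by auto
  interpret h: group_hom "?L Mod K" integer_group h
    using h(1) L.factorgroup_is_group by (simp add: group_hom_def group_hom_axioms_def)
  define \<phi> where "\<phi> a = h (K #>\<^bsub>?L\<^esub> a)" for a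
  have coset: "K #>\<^bsub>?L\<^esub> a \<in> carrier (?L Mod K)" if "a \<in> L" for a
    using that by (simp add: carrier_FactGroup)
  have K_carrier: "K \<in> carrier (?L Mod K)" and h_K: "h K = 0"
    using h.G.one_closed h.hom_one by (simp_all add: integer_group_def)
  show ?thesis
  proof (intro that infinite_cyclic_quotient.intro infinite_cyclic_quotient_axioms.intro)
    show "K \<subseteq> L"
      using L.subset by simp
    show "\<phi> (a \<otimes>\<^bsub>H\<^esub> b) = \<phi> a + \<phi> b" if "a \<in> L" "b \<in> L" for a b
    proof -
      have "K #>\<^bsub>?L\<^esub> (a \<otimes>\<^bsub>H\<^esub> b) = (K #>\<^bsub>?L\<^esub> a) \<otimes>\<^bsub>?L Mod K\<^esub> (K #>\<^bsub>?L\<^esub> b)"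
        using L.rcos_sum that by (simp add: FactGroup_def)
      then show ?thesis
        using h.hom_mult[OF coset coset] that by (simp add: \<phi>_def integer_group_def)
    qed
    show "\<phi> a = 0 \<longleftrightarrow> a \<in> K" if "a \<in> L" for a
    proof -
      have "\<phi> a = 0 \<longleftrightarrow> K #>\<^bsub>?L\<^esub> a = K"
        using h(2) coset[OF that] K_carrier h_K unfolding \<phi>_def bij_betw_def inj_on_def by metis
      also have "\<dots> \<longleftrightarrow> a \<in> K"
        using that L.rcos_self[OF _ L.subgroup_axioms] L.rcos_const by auto
      finally show ?thesis .
    qed
    show "\<exists>a\<in>L. \<phi> a = m" for m
    proof -
      have "m \<in> h ` carrier (?L Mod K)"
        using h(2) unfolding bij_betw_def by simp
      then show ?thesis
        unfolding \<phi>_def carrier_FactGroup by auto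
    qed
  qed (use assms in auto)
qed

section \<open>Orbit sums of finitely supported functions\<close>

definition supp :: "('w \<Rightarrow> int) \<Rightarrow> 'w set" where
  "supp v = {w. v w \<noteq> 0}"

definition finsupp :: "'w set \<Rightarrow> ('w \<Rightarrow> int) set" where
  "finsupp W = {v. finite (supp v) \<and> supp v \<subseteq> W}"

definition right_orbit :: "'h set \<Rightarrow> ('w \<Rightarrow> 'h \<Rightarrow> 'w) \<Rightarrow> 'w \<Rightarrow> 'w set" where
  "right_orbit K act w = {act w k | k. k \<in> K}"

text \<open>\<open>orbit_sum K act v w\<close> is the coefficient of the orbit of \<open>w\<close> in the image of \<open>v\<close> in
  \<open>\<int>[W/K]\<close>, the \<open>K\<close>-coinvariants of \<open>\<int>[W]\<close>.\<close>
definition orbit_sum :: "'h set \<Rightarrow> ('w \<Rightarrow> 'h \<Rightarrow> 'w) \<Rightarrow> ('w \<Rightarrow> int) \<Rightarrow> 'w \<Rightarrow> int" where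
  "orbit_sum K act v w = (\<Sum>u \<in> {u \<in> supp v. u \<in> right_orbit K act w}. v u)"

definition kernel_apply :: "('w \<Rightarrow> 'v \<Rightarrow> int) \<Rightarrow> ('w \<Rightarrow> int) \<Rightarrow> 'v \<Rightarrow> int" where
  "kernel_apply F v = (\<lambda>y. \<Sum>w \<in> supp v. v w * F w y)"

lemma finsuppD:
  assumes "v \<in> finsupp W"
  shows "finite (supp v)" and "supp v \<subseteq> W"
  using assms by (auto simp: finsupp_def)

lemma finsupp_outside:
  assumes "v \<in> finsupp W" "w \<notin> W"
  shows "v w = 0"
  using assms by (auto simp: finsupp_def supp_def)

lemma group_ring_eq_finsupp: "group_ring G = finsupp (carrier G)"
  by (auto simp: group_ring_def finsupp_def supp_def)

lemma supp_diff: "supp (v1 - v2) \<subseteq> supp v1 \<union> supp v2"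
  by (auto simp: supp_def)

lemma finsupp_diff:
  assumes "v1 \<in> finsupp W" "v2 \<in> finsupp W"
  shows "v1 - v2 \<in> finsupp W"
proof -
  have "finite (supp v1 \<union> supp v2)" "supp v1 \<union> supp v2 \<subseteq> W"
    using assms by (auto simp: finsupp_def)
  with supp_diff[of v1 v2] show ?thesis
    unfolding finsupp_def by (auto intro: finite_subset)
qed

lemma orbit_sum_superset:
  assumes "finite S" "supp v \<subseteq> S"
  shows "orbit_sum K act v w = (\<Sum>u \<in> {u \<in> S. u \<in> right_orbit K act w}. v u)"
  unfolding orbit_sum_def using assms by (intro sum.mono_neutral_left) (auto simp: supp_def)

lemma orbit_sum_diff:
  assumes "finite (supp v1)" "finite (supp v2)"
  shows "orbit_sum K act (v1 - v2) w = orbit_sum K act v1 w - orbit_sum K act v2 w"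
proof -
  let ?S = "supp v1 \<union> supp v2"
  have S: "finite ?S"
    using assms by simp
  have "orbit_sum K act (v1 - v2) w = (\<Sum>u \<in> {u \<in> ?S. u \<in> right_orbit K act w}. v1 u - v2 u)"
    using orbit_sum_superset[OF S supp_diff] by simp
  also have "\<dots> = orbit_sum K act v1 w - orbit_sum K act v2 w"
    unfolding orbit_sum_superset[OF S Un_upper1] orbit_sum_superset[OF S Un_upper2]
    by (simp add: sum_subtractf)
  finally show ?thesis .
qed

lemma kernel_apply_superset:
  assumes "finite S" "supp v \<subseteq> S"
  shows "kernel_apply F v y = (\<Sum>w \<in> S. v w * F w y)"
  unfolding kernel_apply_def using assms by (intro sum.mono_neutral_left) (auto simp: supp_def)

lemma kernel_apply_diff:
  assumes "finite (supp v1)" "finite (supp v2)"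
  shows "kernel_apply F (v1 - v2) = kernel_apply F v1 - kernel_apply F v2"
proof
  fix y
  let ?S = "supp v1 \<union> supp v2"
  have S: "finite ?S"
    using assms by simp
  have "kernel_apply F (v1 - v2) y = (\<Sum>w \<in> ?S. (v1 w - v2 w) * F w y)"
    using kernel_apply_superset[OF S supp_diff] by simp
  also have "\<dots> = kernel_apply F v1 y - kernel_apply F v2 y"
    unfolding kernel_apply_superset[OF S Un_upper1] kernel_apply_superset[OF S Un_upper2]
    by (simp add: sum_subtractf left_diff_distrib)
  finally show "kernel_apply F (v1 - v2) y = (kernel_apply F v1 - kernel_apply F v2) y"
    by simp
qed

lemma supp_kernel_apply: "supp (kernel_apply F v) \<subseteq> (\<Union>w \<in> supp v. supp (F w))"
proof
  fix y
  assume "y \<in> supp (kernel_apply F v)"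
  then have "(\<Sum>w \<in> supp v. v w * F w y) \<noteq> 0"
    by (simp add: supp_def kernel_apply_def)
  then obtain w where "w \<in> supp v" "F w y \<noteq> 0"
    by (metis (no_types, lifting) mult_zero_right sum.neutral)
  then show "y \<in> (\<Union>w \<in> supp v. supp (F w))"
    by (auto simp: supp_def)
qed

lemma orbit_sum_kernel_apply:
  assumes "finite (supp v)" "\<And>w. w \<in> supp v \<Longrightarrow> finite (supp (F w))"
  shows "orbit_sum K act (kernel_apply F v) y = (\<Sum>w \<in> supp v. v w * orbit_sum K act (F w) y)"
proof -
  define Z where "Z = (\<Union>w \<in> supp v. supp (F w))"
  have "finite Z"
    using assms by (simp add: Z_def)
  have "orbit_sum K act (kernel_apply F v) y
      = (\<Sum>z \<in> {z \<in> Z. z \<in> right_orbit K act y}. \<Sum>w \<in> supp v. v w * F w z)"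
    unfolding orbit_sum_superset[OF \<open>finite Z\<close> supp_kernel_apply[of F v, folded Z_def]]
    by (simp add: kernel_apply_def)
  also have "\<dots> = (\<Sum>w \<in> supp v. v w * (\<Sum>z \<in> {z \<in> Z. z \<in> right_orbit K act y}. F w z))"
    unfolding sum_distrib_left by (rule sum.swap)
  also have "\<dots> = (\<Sum>w \<in> supp v. v w * orbit_sum K act (F w) y)"
  proof (rule sum.cong)
    fix w
    assume "w \<in> supp v"
    then have "supp (F w) \<subseteq> Z"
      by (auto simp: Z_def)
    then show "v w * (\<Sum>z \<in> {z \<in> Z. z \<in> right_orbit K act y}. F w z) = v w * orbit_sum K act (F w) y"
      by (simp add: orbit_sum_superset[OF \<open>finite Z\<close>])
  qed simp
  finally show ?thesis .
qed

locale right_free_action = group H for H :: "('a, 'b) monoid_scheme" (structure) +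
  fixes W :: "'w set" and act :: "'w \<Rightarrow> 'a \<Rightarrow> 'w"
  assumes act_closed: "w \<in> W \<Longrightarrow> h \<in> carrier H \<Longrightarrow> act w h \<in> W"
    and act_one: "w \<in> W \<Longrightarrow> act w \<one> = w"
    and act_act: "w \<in> W \<Longrightarrow> g \<in> carrier H \<Longrightarrow> h \<in> carrier H \<Longrightarrow> act (act w g) h = act w (g \<otimes> h)"
    and act_free: "w \<in> W \<Longrightarrow> h \<in> carrier H \<Longrightarrow> act w h = w \<Longrightarrow> h = \<one>"
begin

definition translate :: "'a \<Rightarrow> ('w \<Rightarrow> int) \<Rightarrow> 'w \<Rightarrow> int" where
  "translate g v = (\<lambda>u. if u \<in> W then v (act u (inv g)) else 0)"

lemma act_act_inv: "w \<in> W \<Longrightarrow> g \<in> carrier H \<Longrightarrow> act (act w g) (inv g) = w"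
  by (simp add: act_act act_one)

lemma act_inv_act: "w \<in> W \<Longrightarrow> g \<in> carrier H \<Longrightarrow> act (act w (inv g)) g = w"
  by (simp add: act_act act_one)

lemma act_cancel:
  assumes "w \<in> W" "g \<in> carrier H" "h \<in> carrier H" "act w g = act w h"
  shows "g = h"
proof -
  have "act w (g \<otimes> inv h) = w"
    using assms act_act[symmetric] act_act_inv by (metis inv_closed)
  then show ?thesis
    using assms act_free by (metis inv_closed inv_equality inv_inv m_closed)
qed

lemma inj_on_act: "g \<in> carrier H \<Longrightarrow> inj_on (\<lambda>w. act w g) W"
  by (rule inj_onI) (metis act_act_inv)

lemma right_orbit_self:
  assumes "subgroup K H" "w \<in> W"
  shows "w \<in> right_orbit K act w"
  using act_one[OF assms(2)] subgroup.one_closed[OF assms(1)] unfolding right_orbit_def by force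

lemma right_orbit_closed:
  "K \<subseteq> carrier H \<Longrightarrow> w \<in> W \<Longrightarrow> u \<in> right_orbit K act w \<Longrightarrow> u \<in> W"
  unfolding right_orbit_def using act_closed by blast

lemma right_orbit_eq:
  assumes K: "subgroup K H" and "w \<in> W" "u \<in> right_orbit K act w"
  shows "right_orbit K act u = right_orbit K act w"
proof -
  obtain k where k: "k \<in> K" "u = act w k"
    using assms unfolding right_orbit_def by blast
  have kH: "k' \<in> K \<Longrightarrow> k' \<in> carrier H" for k'
    using subgroup.subset[OF K] by blast
  show ?thesis
  proof (intro equalityI subsetI)
    fix x
    assume "x \<in> right_orbit K act u"
    then obtain k' where "k' \<in> K" "x = act w (k \<otimes> k')"
      using k \<open>w \<in> W\<close> kH unfolding right_orbit_def by (auto simp: act_act)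
    then show "x \<in> right_orbit K act w"
      using subgroup.m_closed[OF K k(1)] unfolding right_orbit_def by blast
  next
    fix x
    assume "x \<in> right_orbit K act w"
    then obtain k' where "k' \<in> K" "x = act u (inv k \<otimes> k')"
      using k \<open>w \<in> W\<close> kH unfolding right_orbit_def by (auto simp: act_act m_assoc[symmetric])
    then show "x \<in> right_orbit K act u"
      using subgroup.m_closed[OF K subgroup.m_inv_closed[OF K k(1)]] unfolding right_orbit_def by blast
  qed
qed

lemma translate_act: "w \<in> W \<Longrightarrow> g \<in> carrier H \<Longrightarrow> translate g v (act w g) = v w"
  by (simp add: translate_def act_closed act_act_inv)

lemma supp_translate:
  assumes g: "g \<in> carrier H" and v: "v \<in> finsupp W"
  shows "supp (translate g v) = (\<lambda>w. act w g) ` supp v"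
proof (intro equalityI subsetI)
  fix u
  assume u: "u \<in> supp (translate g v)"
  then have "u \<in> W" "act u (inv g) \<in> supp v"
    by (auto simp: translate_def supp_def split: if_splits)
  moreover have "u = act (act u (inv g)) g"
    using act_inv_act[OF \<open>u \<in> W\<close> g] by simp
  ultimately show "u \<in> (\<lambda>w. act w g) ` supp v"
    by blast
next
  fix u
  assume "u \<in> (\<lambda>w. act w g) ` supp v"
  then obtain w where "w \<in> supp v" "u = act w g"
    by blast
  moreover have "w \<in> W"
    using \<open>w \<in> supp v\<close> finsuppD(2)[OF v] by blast
  ultimately show "u \<in> supp (translate g v)"
    using translate_act[OF _ g] by (simp add: supp_def)
qed

lemma translate_finsupp:
  assumes "g \<in> carrier H" "v \<in> finsupp W"
  shows "translate g v \<in> finsupp W"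
  using supp_translate[OF assms] finsuppD[OF assms(2)] act_closed[OF _ assms(1)]
  unfolding finsupp_def by auto

lemma orbit_sum_translate_eq:
  assumes g: "g \<in> carrier H" and v: "v \<in> finsupp W"
    and orbits: "\<And>x. x \<in> W \<Longrightarrow> act x g \<in> right_orbit K act w \<longleftrightarrow> x \<in> right_orbit K act w'"
  shows "orbit_sum K act (translate g v) w = orbit_sum K act v w'"
proof -
  have "{u \<in> supp (translate g v). u \<in> right_orbit K act w}
      = (\<lambda>x. act x g) ` {x \<in> supp v. x \<in> right_orbit K act w'}"
    using supp_translate[OF g v] orbits finsuppD(2)[OF v] by auto
  moreover have "inj_on (\<lambda>x. act x g) {x \<in> supp v. x \<in> right_orbit K act w'}"
    by (rule inj_on_subset[OF inj_on_act[OF g]]) (use finsuppD(2)[OF v] in auto)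
  ultimately show ?thesis
    unfolding orbit_sum_def using finsuppD(2)[OF v] g
    by (simp add: sum.reindex translate_act subset_iff)
qed

lemma orbit_sum_translate_subgroup:
  assumes K: "subgroup K H" and "k \<in> K" "v \<in> finsupp W" "w \<in> W"
  shows "orbit_sum K act (translate k v) w = orbit_sum K act v w"
proof (rule orbit_sum_translate_eq)
  have kH: "k \<in> carrier H"
    using assms subgroup.subset by blast
  then show "k \<in> carrier H" .
  show "act x k \<in> right_orbit K act w \<longleftrightarrow> x \<in> right_orbit K act w" if "x \<in> W" for x
  proof -
    have "act x k \<in> right_orbit K act x"
      using \<open>k \<in> K\<close> unfolding right_orbit_def by blast
    moreover have "x = act (act x k) (inv k)"
      using act_act_inv[OF that kH] by simp
    then have "x \<in> right_orbit K act (act x k)"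
      using subgroup.m_inv_closed[OF K \<open>k \<in> K\<close>] unfolding right_orbit_def by blast
    ultimately show ?thesis
      using right_orbit_eq[OF K \<open>w \<in> W\<close>] by blast
  qed
qed (use assms in auto)

lemma orbit_sum_trivial: "w \<in> W \<Longrightarrow> orbit_sum {\<one>} act v w = v w"
proof -
  assume "w \<in> W"
  then have "{u \<in> supp v. u \<in> right_orbit {\<one>} act w} = (if v w = 0 then {} else {w})"
    by (auto simp: right_orbit_def act_one supp_def)
  then show ?thesis
    by (simp add: orbit_sum_def)
qed

end

section \<open>Heights over an infinite cyclic quotient\<close>

locale cyclic_quotient_action =
  right_free_action H W act + infinite_cyclic_quotient H K L \<phi>
  for H :: "('a, 'b) monoid_scheme" (structure) and W :: "'w set" and act K L \<phi>
begin

text \<open>A base point in each \<open>L\<close>-orbit identifies it with \<open>L\<close>, and its \<open>K\<close>-orbits with the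
  heights \<open>\<phi>\<close> in \<open>L/K \<cong> \<int>\<close>.\<close>
definition orbit_rep :: "'w \<Rightarrow> 'w" where
  "orbit_rep w = (SOME r. r \<in> right_orbit L act w)"

definition orbit_coord :: "'w \<Rightarrow> 'a" where
  "orbit_coord w = (SOME l. l \<in> L \<and> act (orbit_rep w) l = w)"

definition height :: "'w \<Rightarrow> int" where
  "height w = \<phi> (orbit_coord w)"

definition at_height :: "'w \<Rightarrow> int \<Rightarrow> 'w" where
  "at_height r m = act r (lift m)"

lemma orbit_rep_in: "w \<in> W \<Longrightarrow> orbit_rep w \<in> right_orbit L act w"
  unfolding orbit_rep_def by (rule someI[of "\<lambda>r. r \<in> right_orbit L act w"])
    (rule right_orbit_self[OF subgroup_L])

lemma orbit_rep_closed: "w \<in> W \<Longrightarrow> orbit_rep w \<in> W"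
  using right_orbit_closed[OF subgroup.subset[OF subgroup_L]] orbit_rep_in by blast

lemma orbit_rep_eq: "w \<in> W \<Longrightarrow> u \<in> right_orbit L act w \<Longrightarrow> orbit_rep u = orbit_rep w"
  unfolding orbit_rep_def using right_orbit_eq[OF subgroup_L] by simp

lemma orbit_rep_act: "w \<in> W \<Longrightarrow> l \<in> L \<Longrightarrow> orbit_rep (act w l) = orbit_rep w"
  using orbit_rep_eq unfolding right_orbit_def by blast

lemma orbit_rep_idem: "w \<in> W \<Longrightarrow> orbit_rep (orbit_rep w) = orbit_rep w"
  using orbit_rep_eq orbit_rep_in by blast

lemma orbit_coord:
  assumes "w \<in> W"
  shows "orbit_coord w \<in> L" and "act (orbit_rep w) (orbit_coord w) = w"
proof -
  obtain l where l: "l \<in> L" "orbit_rep w = act w l"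
    using orbit_rep_in[OF assms] unfolding right_orbit_def by blast
  then have "inv l \<in> L \<and> act (orbit_rep w) (inv l) = w"
    using assms act_act_inv L_carrier subgroup.m_inv_closed[OF subgroup_L] by simp
  then have "\<exists>l. l \<in> L \<and> act (orbit_rep w) l = w"
    by blast
  then have "orbit_coord w \<in> L \<and> act (orbit_rep w) (orbit_coord w) = w"
    unfolding orbit_coord_def by (rule someI_ex)
  then show "orbit_coord w \<in> L" and "act (orbit_rep w) (orbit_coord w) = w"
    by simp_all
qed

lemma orbit_coord_unique:
  assumes "w \<in> W" "l \<in> L" "act (orbit_rep w) l = w"
  shows "orbit_coord w = l"
  using act_cancel[OF orbit_rep_closed[OF assms(1)] L_carrier[OF orbit_coord(1)[OF assms(1)]]
      L_carrier[OF assms(2)]] orbit_coord(2)[OF assms(1)] assms(3)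
  by simp

lemma height_act:
  assumes "w \<in> W" "l \<in> L"
  shows "height (act w l) = height w + \<phi> l"
proof -
  have c: "orbit_coord w \<in> L"
    using orbit_coord(1)[OF assms(1)] .
  have "act (orbit_rep (act w l)) (orbit_coord w \<otimes> l)
      = act (act (orbit_rep w) (orbit_coord w)) l"
    using orbit_rep_act[OF assms] act_act[OF orbit_rep_closed[OF assms(1)] L_carrier[OF c]
        L_carrier[OF assms(2)]]
    by simp
  also have "\<dots> = act w l"
    using orbit_coord(2)[OF assms(1)] by simp
  finally have "orbit_coord (act w l) = orbit_coord w \<otimes> l"
    by (rule orbit_coord_unique[OF act_closed[OF assms(1) L_carrier[OF assms(2)]]
          subgroup.m_closed[OF subgroup_L c assms(2)]])
  then show ?thesis
    unfolding height_def using phi_mult[OF c assms(2)] by simp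
qed

lemma height_orbit_rep: "w \<in> W \<Longrightarrow> height (orbit_rep w) = 0"
proof -
  assume w: "w \<in> W"
  have "act (orbit_rep (orbit_rep w)) \<one> = orbit_rep w"
    using orbit_rep_idem[OF w] act_one[OF orbit_rep_closed[OF w]] by simp
  then have "orbit_coord (orbit_rep w) = \<one>"
    by (rule orbit_coord_unique[OF orbit_rep_closed[OF w] subgroup.one_closed[OF subgroup_L]])
  then show ?thesis
    unfolding height_def using phi_one by simp
qed

lemma at_height:
  assumes "w \<in> W"
  shows "at_height (orbit_rep w) m \<in> W"
    and "orbit_rep (at_height (orbit_rep w) m) = orbit_rep w"
    and "height (at_height (orbit_rep w) m) = m"
  using act_closed[OF orbit_rep_closed[OF assms] L_carrier[OF lift(1)]]
    orbit_rep_act[OF orbit_rep_closed[OF assms] lift(1)] orbit_rep_idem[OF assms]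
    height_act[OF orbit_rep_closed[OF assms] lift(1)] height_orbit_rep[OF assms] lift(2)
  unfolding at_height_def by simp_all

lemma orbit_coord_quotient:
  assumes "u \<in> W" "w \<in> W" "orbit_rep u = orbit_rep w"
  shows "inv (orbit_coord w) \<otimes> orbit_coord u \<in> L"
    and "\<phi> (inv (orbit_coord w) \<otimes> orbit_coord u) = height u - height w"
    and "act w (inv (orbit_coord w) \<otimes> orbit_coord u) = u"
proof -
  have cu: "orbit_coord u \<in> L" and cw: "orbit_coord w \<in> L"
    using orbit_coord(1) assms(1,2) by blast+
  show l: "inv (orbit_coord w) \<otimes> orbit_coord u \<in> L"
    using subgroup.m_closed[OF subgroup_L subgroup.m_inv_closed[OF subgroup_L cw] cu] .
  show "\<phi> (inv (orbit_coord w) \<otimes> orbit_coord u) = height u - height w"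
    using phi_mult[OF subgroup.m_inv_closed[OF subgroup_L cw] cu] phi_inv[OF cw]
    unfolding height_def by simp
  have "act w (inv (orbit_coord w) \<otimes> orbit_coord u)
      = act (act (orbit_rep w) (orbit_coord w)) (inv (orbit_coord w) \<otimes> orbit_coord u)"
    using orbit_coord(2)[OF assms(2)] by simp
  also have "\<dots> = act (orbit_rep w) (orbit_coord w \<otimes> (inv (orbit_coord w) \<otimes> orbit_coord u))"
    using act_act[OF orbit_rep_closed[OF assms(2)] L_carrier[OF cw] L_carrier[OF l]] .
  also have "\<dots> = act (orbit_rep u) (orbit_coord u)"
    using assms(3) L_carrier[OF cw] L_carrier[OF cu] by (simp add: m_assoc[symmetric])
  also have "\<dots> = u"
    using orbit_coord(2)[OF assms(1)] .
  finally show "act w (inv (orbit_coord w) \<otimes> orbit_coord u) = u" .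
qed

lemma mem_right_orbit_L_iff:
  assumes "u \<in> W" "w \<in> W"
  shows "u \<in> right_orbit L act w \<longleftrightarrow> orbit_rep u = orbit_rep w"
proof
  assume "u \<in> right_orbit L act w"
  then show "orbit_rep u = orbit_rep w"
    using orbit_rep_eq[OF assms(2)] by simp
next
  assume "orbit_rep u = orbit_rep w"
  from orbit_coord_quotient[OF assms this] show "u \<in> right_orbit L act w"
    unfolding right_orbit_def by force
qed

lemma mem_right_orbit_K_iff:
  assumes "u \<in> W" "w \<in> W"
  shows "u \<in> right_orbit K act w \<longleftrightarrow> orbit_rep u = orbit_rep w \<and> height u = height w"
proof
  assume "u \<in> right_orbit K act w"
  then obtain k where "k \<in> K" "u = act w k"
    unfolding right_orbit_def by blast
  then show "orbit_rep u = orbit_rep w \<and> height u = height w"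
    using orbit_rep_act[OF assms(2)] height_act[OF assms(2)] K_subset_L phi_eq_0_iff by auto
next
  assume eq: "orbit_rep u = orbit_rep w \<and> height u = height w"
  then have "inv (orbit_coord w) \<otimes> orbit_coord u \<in> K"
    using orbit_coord_quotient[OF assms] phi_eq_0_iff by simp
  with orbit_coord_quotient(3)[OF assms conjunct1[OF eq]] show "u \<in> right_orbit K act w"
    unfolding right_orbit_def by force
qed

lemma orbit_sum_K_eq:
  assumes "v \<in> finsupp W" "w \<in> W"
  shows "orbit_sum K act v w
    = (\<Sum>x \<in> {x \<in> supp v. orbit_rep x = orbit_rep w \<and> height x = height w}. v x)"
proof -
  have "{u \<in> supp v. u \<in> right_orbit K act w}
      = {x \<in> supp v. orbit_rep x = orbit_rep w \<and> height x = height w}"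
    using mem_right_orbit_K_iff[OF _ assms(2)] finsuppD(2)[OF assms(1)] by blast
  then show ?thesis
    unfolding orbit_sum_def by simp
qed

lemma orbit_sum_L_eq:
  assumes "v \<in> finsupp W" "w \<in> W"
  shows "orbit_sum L act v w = (\<Sum>x \<in> {x \<in> supp v. orbit_rep x = orbit_rep w}. v x)"
proof -
  have "{u \<in> supp v. u \<in> right_orbit L act w} = {x \<in> supp v. orbit_rep x = orbit_rep w}"
    using mem_right_orbit_L_iff[OF _ assms(2)] finsuppD(2)[OF assms(1)] by blast
  then show ?thesis
    unfolding orbit_sum_def by simp
qed

lemma orbit_sum_K_cong:
  assumes "v \<in> finsupp W" "u \<in> W" "w \<in> W" "orbit_rep u = orbit_rep w" "height u = height w"
  shows "orbit_sum K act v u = orbit_sum K act v w"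
  using assms by (simp add: orbit_sum_K_eq)

lemma orbit_sum_translate:
  assumes v: "v \<in> finsupp W" and w: "w \<in> W" and g: "g \<in> L"
  shows "orbit_sum K act (translate g v) w = orbit_sum K act v (act w (inv g))"
proof (rule orbit_sum_translate_eq[OF L_carrier[OF g] v])
  fix x
  assume x: "x \<in> W"
  have g': "inv g \<in> L"
    using subgroup.m_inv_closed[OF subgroup_L g] .
  have w': "act w (inv g) \<in> W"
    using act_closed[OF w L_carrier[OF g']] .
  show "act x g \<in> right_orbit K act w \<longleftrightarrow> x \<in> right_orbit K act (act w (inv g))"
    unfolding mem_right_orbit_K_iff[OF act_closed[OF x L_carrier[OF g]] w] mem_right_orbit_K_iff[OF x w']
    using orbit_rep_act[OF x g] orbit_rep_act[OF w g'] height_act[OF x g] height_act[OF w g'] phi_inv[OF g]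
    by auto
qed

lemma orbit_sum_vanishes_at_large_height:
  assumes v: "v \<in> finsupp W" and w: "w \<in> W"
  shows "\<exists>B. \<forall>m > B. orbit_sum K act v (at_height (orbit_rep w) m) = 0"
proof -
  define B where "B = (\<Sum>x \<in> supp v. \<bar>height x\<bar>)"
  have below: "height x \<le> B" if "x \<in> supp v" for x
  proof -
    have "\<bar>height x\<bar> \<le> B"
      unfolding B_def using that finsuppD(1)[OF v] by (intro member_le_sum) auto
    then show ?thesis
      by simp
  qed
  have "orbit_sum K act v (at_height (orbit_rep w) m) = 0" if "B < m" for m
  proof -
    have "{x \<in> supp v. orbit_rep x = orbit_rep w \<and> height x = m} = {}"
      using below that by fastforce
    then show ?thesis
      unfolding orbit_sum_K_eq[OF v at_height(1)[OF w]] at_height(2,3)[OF w] by (simp only: sum.empty)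
  qed
  then show ?thesis
    by blast
qed

lemma translate_invariant_orbit_sum_eq_0:
  assumes v: "v \<in> finsupp W"
    and invariant: "\<And>u. u \<in> W \<Longrightarrow> orbit_sum K act (translate (lift 1) v) u = orbit_sum K act v u"
    and w: "w \<in> W"
  shows "orbit_sum K act v w = 0"
proof -
  define c where "c j = at_height (orbit_rep w) (height w + int j)" for j
  have c: "c j \<in> W" "orbit_rep (c j) = orbit_rep w" "height (c j) = height w + int j" for j
    unfolding c_def using at_height[OF w] by simp_all
  have t: "lift 1 \<in> L" "inv (lift 1) \<in> L"
    using lift(1) subgroup.m_inv_closed[OF subgroup_L lift(1)] by simp_all
  have step: "orbit_sum K act v (c (Suc j)) = orbit_sum K act v (c j)" for j
  proof -
    have "orbit_sum K act v (c (Suc j)) = orbit_sum K act v (act (c (Suc j)) (inv (lift 1)))"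
      using invariant[OF c(1)] orbit_sum_translate[OF v c(1) t(1)] by simp
    also have "\<dots> = orbit_sum K act v (c j)"
      using c orbit_rep_act[OF c(1) t(2)] height_act[OF c(1) t(2)] phi_inv[OF t(1)] lift(2)
      by (intro orbit_sum_K_cong[OF v act_closed[OF c(1) L_carrier[OF t(2)]] c(1)]) auto
    finally show ?thesis .
  qed
  have const: "orbit_sum K act v (c j) = orbit_sum K act v w" for j
  proof (induction j)
    case 0
    show ?case
      using c[of 0] by (intro orbit_sum_K_cong[OF v c(1) w]) auto
  qed (simp add: step)
  obtain B where "\<forall>m > B. orbit_sum K act v (at_height (orbit_rep w) m) = 0"
    using orbit_sum_vanishes_at_large_height[OF v w] by blast
  then have "orbit_sum K act v (c (nat (B - height w + 1))) = 0"
    unfolding c_def by simp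
  then show ?thesis
    using const by simp
qed

lemma orbit_sum_L_eq_0:
  assumes v: "v \<in> finsupp W"
    and K_sums: "\<And>u. u \<in> W \<Longrightarrow> orbit_sum K act v u = 0"
    and w: "w \<in> W"
  shows "orbit_sum L act v w = 0"
proof -
  let ?S = "{x \<in> supp v. orbit_rep x = orbit_rep w}"
  have "finite ?S"
    using finsuppD(1)[OF v] by simp
  then have "orbit_sum L act v w = (\<Sum>m \<in> height ` ?S. \<Sum>x \<in> {x \<in> ?S. height x = m}. v x)"
    unfolding orbit_sum_L_eq[OF v w] by (rule sum.image_gen)
  also have "\<dots> = 0"
  proof (rule sum.neutral, rule ballI)
    fix m
    assume "m \<in> height ` ?S"
    have "(\<Sum>x \<in> {x \<in> ?S. height x = m}. v x) = orbit_sum K act v (at_height (orbit_rep w) m)"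
      using orbit_sum_K_eq[OF v at_height(1)[OF w]] at_height[OF w] by (simp add: conj_assoc)
    then show "(\<Sum>x \<in> {x \<in> ?S. height x = m}. v x) = 0"
      using K_sums[OF at_height(1)[OF w]] by simp
  qed
  finally show ?thesis .
qed

definition lower_sum :: "('w \<Rightarrow> int) \<Rightarrow> 'w \<Rightarrow> int" where
  "lower_sum v w = (\<Sum>x \<in> {x \<in> supp v. orbit_rep x = orbit_rep w \<and> height x \<le> height w}. v x)"

text \<open>If the \<open>L\<close>-orbit sums of \<open>v\<close> vanish, its \<open>K\<close>-orbit sums are those of \<open>(t - 1) (antidiff v)\<close>
  for \<open>t = lift 1\<close>: its value at height \<open>m\<close> is minus the sum of \<open>v\<close> over the heights \<open>\<le> m\<close>,
  put at one chosen point of that height.\<close>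
definition antidiff :: "('w \<Rightarrow> int) \<Rightarrow> 'w \<Rightarrow> int" where
  "antidiff v u = (if u \<in> W \<and> u = at_height (orbit_rep u) (height u) then - lower_sum v u else 0)"

definition height_span :: "('w \<Rightarrow> int) \<Rightarrow> ('w \<times> int) set" where
  "height_span v = {(r, m). \<exists>x1 \<in> supp v. \<exists>x2 \<in> supp v.
      orbit_rep x1 = r \<and> orbit_rep x2 = r \<and> height x1 \<le> m \<and> m \<le> height x2}"

lemma finite_height_span:
  assumes "v \<in> finsupp W"
  shows "finite (height_span v)"
proof -
  let ?B = "orbit_rep ` supp v \<times> (\<Union>x1 \<in> supp v. \<Union>x2 \<in> supp v. {height x1..height x2})"
  have "height_span v \<subseteq> ?B"
    unfolding height_span_def by fastforce
  moreover have "finite ?B"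
    using finsuppD(1)[OF assms] by simp
  ultimately show ?thesis
    by (rule finite_subset)
qed

lemma lower_sum_eq_neg_upper_sum:
  assumes v: "v \<in> finsupp W" and L_sum: "orbit_sum L act v u = 0" and u: "u \<in> W"
  shows "lower_sum v u
    = - (\<Sum>x \<in> {x \<in> supp v. orbit_rep x = orbit_rep u \<and> height u < height x}. v x)"
proof -
  let ?S = "{x \<in> supp v. orbit_rep x = orbit_rep u}" and ?B = "{x. height x \<le> height u}"
  have "finite ?S"
    using finsuppD(1)[OF v] by simp
  have "0 = (\<Sum>x \<in> ?S. v x)"
    using L_sum orbit_sum_L_eq[OF v u] by simp
  also have "\<dots> = (\<Sum>x \<in> ?S \<inter> ?B. v x) + (\<Sum>x \<in> ?S - ?B. v x)"
    by (rule sum.Int_Diff[OF \<open>finite ?S\<close>])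
  also have "?S \<inter> ?B = {x \<in> supp v. orbit_rep x = orbit_rep u \<and> height x \<le> height u}"
    by blast
  also have "?S - ?B = {x \<in> supp v. orbit_rep x = orbit_rep u \<and> height u < height x}"
    by auto
  finally show ?thesis
    unfolding lower_sum_def by linarith
qed

lemma supp_antidiff:
  assumes v: "v \<in> finsupp W" and L_sums: "\<And>w. w \<in> W \<Longrightarrow> orbit_sum L act v w = 0"
    and u: "u \<in> supp (antidiff v)"
  shows "u \<in> W" and "u = at_height (orbit_rep u) (height u)"
    and "\<exists>x \<in> supp v. orbit_rep x = orbit_rep u \<and> height x \<le> height u"
    and "\<exists>x \<in> supp v. orbit_rep x = orbit_rep u \<and> height u < height x"
proof -
  have "antidiff v u \<noteq> 0"
    using u by (simp add: supp_def)
  then have uW: "u \<in> W" and u_at: "u = at_height (orbit_rep u) (height u)"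
    and nz: "lower_sum v u \<noteq> 0"
    unfolding antidiff_def by (auto split: if_splits)
  show "u \<in> W" "u = at_height (orbit_rep u) (height u)"
    using uW u_at by simp_all
  show "\<exists>x \<in> supp v. orbit_rep x = orbit_rep u \<and> height x \<le> height u"
  proof (rule ccontr)
    assume "\<not> ?thesis"
    then have "{x \<in> supp v. orbit_rep x = orbit_rep u \<and> height x \<le> height u} = {}"
      by blast
    then have "lower_sum v u = 0"
      unfolding lower_sum_def by (simp only: sum.empty)
    then show False
      using nz by simp
  qed
  show "\<exists>x \<in> supp v. orbit_rep x = orbit_rep u \<and> height u < height x"
  proof (rule ccontr)
    assume "\<not> ?thesis"
    then have "{x \<in> supp v. orbit_rep x = orbit_rep u \<and> height u < height x} = {}"
      by blast
    then have "lower_sum v u = 0"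
      unfolding lower_sum_eq_neg_upper_sum[OF v L_sums[OF uW] uW] by (simp only: sum.empty)
    then show False
      using nz by simp
  qed
qed

lemma antidiff_finsupp:
  assumes v: "v \<in> finsupp W" and L_sums: "\<And>w. w \<in> W \<Longrightarrow> orbit_sum L act v w = 0"
  shows "antidiff v \<in> finsupp W"
proof -
  have "supp (antidiff v) \<subseteq> (\<lambda>(r, m). at_height r m) ` height_span v"
  proof
    fix u
    assume u: "u \<in> supp (antidiff v)"
    have "(orbit_rep u, height u) \<in> height_span v"
      using supp_antidiff(3,4)[OF v L_sums u] unfolding height_span_def by force
    moreover have "u = (\<lambda>(r, m). at_height r m) (orbit_rep u, height u)"
      using supp_antidiff(2)[OF v L_sums u] by simp
    ultimately show "u \<in> (\<lambda>(r, m). at_height r m) ` height_span v"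
      by (rule rev_image_eqI)
  qed
  then have "finite (supp (antidiff v))"
    using finite_height_span[OF v] finite_subset by blast
  moreover have "supp (antidiff v) \<subseteq> W"
    using supp_antidiff(1)[OF v L_sums] by blast
  ultimately show ?thesis
    unfolding finsupp_def by blast
qed

lemma orbit_sum_antidiff:
  assumes v: "v \<in> finsupp W" and L_sums: "\<And>w. w \<in> W \<Longrightarrow> orbit_sum L act v w = 0"
    and w: "w \<in> W"
  shows "orbit_sum K act (antidiff v) w = - lower_sum v w"
proof -
  define c where "c = at_height (orbit_rep w) (height w)"
  have c: "c \<in> W" "orbit_rep c = orbit_rep w" "height c = height w"
    unfolding c_def using at_height[OF w] by simp_all
  have "{u \<in> supp (antidiff v). u \<in> right_orbit K act w} \<subseteq> {c}"
  proof
    fix u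
    assume "u \<in> {u \<in> supp (antidiff v). u \<in> right_orbit K act w}"
    then have u: "u \<in> supp (antidiff v)" "u \<in> right_orbit K act w"
      by simp_all
    then have "orbit_rep u = orbit_rep w" "height u = height w"
      using mem_right_orbit_K_iff[OF supp_antidiff(1)[OF v L_sums u(1)] w] by simp_all
    then show "u \<in> {c}"
      using supp_antidiff(2)[OF v L_sums u(1)] unfolding c_def by simp
  qed
  moreover have "c \<in> right_orbit K act w"
    using mem_right_orbit_K_iff[OF c(1) w] c by simp
  ultimately have "orbit_sum K act (antidiff v) w = (\<Sum>u \<in> {c}. antidiff v u)"
    unfolding orbit_sum_def by (intro sum.mono_neutral_left) (auto simp: supp_def)
  also have "\<dots> = - lower_sum v c"
    using c unfolding antidiff_def c_def by simp
  also have "lower_sum v c = lower_sum v w"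
    unfolding lower_sum_def using c by simp
  finally show ?thesis .
qed

lemma orbit_sum_translate_antidiff:
  assumes v: "v \<in> finsupp W" and L_sums: "\<And>w. w \<in> W \<Longrightarrow> orbit_sum L act v w = 0"
    and w: "w \<in> W"
  shows "orbit_sum K act v w
    = orbit_sum K act (translate (lift 1) (antidiff v)) w - orbit_sum K act (antidiff v) w"
proof -
  let ?w' = "act w (inv (lift 1))"
  have t: "inv (lift 1) \<in> L"
    using subgroup.m_inv_closed[OF subgroup_L lift(1)] .
  have w': "?w' \<in> W" "orbit_rep ?w' = orbit_rep w" "height ?w' = height w - 1"
    using act_closed[OF w L_carrier[OF t]] orbit_rep_act[OF w t] height_act[OF w t]
      phi_inv[OF lift(1)] lift(2)
    by simp_all
  let ?S = "{x \<in> supp v. orbit_rep x = orbit_rep w \<and> height x \<le> height w}"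
    and ?B = "{x. height x \<le> height w - 1}"
  have "finite ?S"
    using finsuppD(1)[OF v] by simp
  have "lower_sum v w = (\<Sum>x \<in> ?S \<inter> ?B. v x) + (\<Sum>x \<in> ?S - ?B. v x)"
    unfolding lower_sum_def by (rule sum.Int_Diff[OF \<open>finite ?S\<close>])
  also have "?S \<inter> ?B = {x \<in> supp v. orbit_rep x = orbit_rep ?w' \<and> height x \<le> height ?w'}"
    using w' by auto
  also have "?S - ?B = {x \<in> supp v. orbit_rep x = orbit_rep w \<and> height x = height w}"
    by auto
  finally have "lower_sum v w = lower_sum v ?w' + orbit_sum K act v w"
    unfolding orbit_sum_K_eq[OF v w] lower_sum_def by simp
  moreover have "orbit_sum K act (translate (lift 1) (antidiff v)) w = - lower_sum v ?w'"
    using orbit_sum_translate[OF antidiff_finsupp[OF v L_sums] w lift(1)]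
      orbit_sum_antidiff[OF v L_sums w'(1)]
    by simp
  ultimately show ?thesis
    using orbit_sum_antidiff[OF v L_sums w] by simp
qed

lemma orbit_sum_eq_0_of_antidiff:
  assumes v: "v \<in> finsupp W" and L_sums: "\<And>w. w \<in> W \<Longrightarrow> orbit_sum L act v w = 0"
    and antidiff_sums: "\<And>w. w \<in> W \<Longrightarrow> orbit_sum K act (antidiff v) w = 0" and w: "w \<in> W"
  shows "orbit_sum K act v w = 0"
proof -
  have "inv (lift 1) \<in> L"
    using subgroup.m_inv_closed[OF subgroup_L lift(1)] .
  then have "orbit_sum K act (translate (lift 1) (antidiff v)) w = 0"
    using orbit_sum_translate[OF antidiff_finsupp[OF v L_sums] w lift(1)]
      antidiff_sums act_closed[OF w L_carrier]
    by simp
  then show ?thesis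
    using orbit_sum_translate_antidiff[OF v L_sums w] antidiff_sums[OF w] by simp
qed

lemma card_height_span_antidiff:
  assumes v: "v \<in> finsupp W" and L_sums: "\<And>w. w \<in> W \<Longrightarrow> orbit_sum L act v w = 0"
    and "supp v \<noteq> {}"
  shows "card (height_span (antidiff v)) < card (height_span v)"
proof -
  have fin: "finite (height ` supp v)" "height ` supp v \<noteq> {}"
    using finsuppD(1)[OF v] assms(3) by auto
  obtain top where top: "top \<in> supp v" "height top = Max (height ` supp v)"
    using Max_in[OF fin] by auto
  have below_top: "height x \<le> height top" if "x \<in> supp v" for x
    using Max_ge[OF fin(1)] that top(2) by simp
  have "height_span (antidiff v) \<subseteq> height_span v - {(orbit_rep top, height top)}"
  proof
    fix p
    assume "p \<in> height_span (antidiff v)"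
    then obtain r m x1 x2 where p: "p = (r, m)" "x1 \<in> supp (antidiff v)" "x2 \<in> supp (antidiff v)"
        "orbit_rep x1 = r" "orbit_rep x2 = r" "height x1 \<le> m" "m \<le> height x2"
      unfolding height_span_def by blast
    obtain y1 where y1: "y1 \<in> supp v" "orbit_rep y1 = orbit_rep x1" "height y1 \<le> height x1"
      using supp_antidiff(3)[OF v L_sums p(2)] by blast
    obtain y2 where y2: "y2 \<in> supp v" "orbit_rep y2 = orbit_rep x2" "height x2 < height y2"
      using supp_antidiff(4)[OF v L_sums p(3)] by blast
    have "p \<in> height_span v"
      unfolding height_span_def using p y1 y2 by force
    moreover have "m < height top"
      using below_top[OF y2(1)] y2(3) p(7) by simp
    ultimately show "p \<in> height_span v - {(orbit_rep top, height top)}"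
      using p(1) by auto
  qed
  moreover have "(orbit_rep top, height top) \<in> height_span v"
    unfolding height_span_def using top(1) by blast
  ultimately have "height_span (antidiff v) \<subset> height_span v"
    by blast
  then show ?thesis
    by (rule psubset_card_mono[OF finite_height_span[OF v]])
qed

end

section \<open>Equivariant kernels\<close>

locale equivariant_kernel =
  group H + S: right_free_action H W act + T: right_free_action H W' act'
  for H :: "('a, 'b) monoid_scheme" (structure) and W :: "'w set" and act
    and W' :: "'v set" and act' +
  fixes F :: "'w \<Rightarrow> 'v \<Rightarrow> int"
  assumes kernel_finsupp: "w \<in> W \<Longrightarrow> F w \<in> finsupp W'"
    and kernel_equivariant:
      "w \<in> W \<Longrightarrow> y \<in> W' \<Longrightarrow> h \<in> carrier H \<Longrightarrow> F (act w h) (act' y h) = F w y"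
begin

definition coinvariant_injective :: "'a set \<Rightarrow> bool" where
  "coinvariant_injective K \<longleftrightarrow> (\<forall>v \<in> finsupp W.
      (\<forall>y \<in> W'. orbit_sum K act' (kernel_apply F v) y = 0) \<longrightarrow> (\<forall>w \<in> W. orbit_sum K act v w = 0))"

lemma kernel_act:
  assumes w: "w \<in> W" and g: "g \<in> carrier H"
  shows "F (act w g) = T.translate g (F w)"
proof
  fix z
  show "F (act w g) z = T.translate g (F w) z"
  proof (cases "z \<in> W'")
    case True
    have "F (act w g) z = F (act w g) (act' (act' z (inv g)) g)"
      using T.act_inv_act[OF True g] by simp
    also have "\<dots> = F w (act' z (inv g))"
      by (rule kernel_equivariant[OF w T.act_closed[OF True inv_closed[OF g]] g])
    finally show ?thesis
      unfolding T.translate_def using True by simp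
  next
    case False
    then show ?thesis
      unfolding T.translate_def using finsupp_outside[OF kernel_finsupp[OF S.act_closed[OF w g]]]
      by simp
  qed
qed

lemma kernel_apply_finsupp:
  assumes v: "v \<in> finsupp W"
  shows "kernel_apply F v \<in> finsupp W'"
proof -
  have sv: "w \<in> supp v \<Longrightarrow> w \<in> W" for w
    using finsuppD(2)[OF v] by blast
  have fin: "finite (\<Union>w \<in> supp v. supp (F w))"
    by (rule finite_UN_I[OF finsuppD(1)[OF v] finsuppD(1)[OF kernel_finsupp[OF sv]]])
  have sub: "(\<Union>w \<in> supp v. supp (F w)) \<subseteq> W'"
    using finsuppD(2)[OF kernel_finsupp[OF sv]] by blast
  show ?thesis
    unfolding finsupp_def
    using finite_subset[OF supp_kernel_apply fin] subset_trans[OF supp_kernel_apply sub] by simp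
qed

lemma kernel_apply_translate:
  assumes v: "v \<in> finsupp W" and g: "g \<in> carrier H"
  shows "kernel_apply F (S.translate g v) = T.translate g (kernel_apply F v)"
proof
  fix y
  show "kernel_apply F (S.translate g v) y = T.translate g (kernel_apply F v) y"
  proof (cases "y \<in> W'")
    case True
    have "kernel_apply F (S.translate g v) y
        = (\<Sum>x \<in> supp v. S.translate g v (act x g) * F (act x g) y)"
      unfolding kernel_apply_def S.supp_translate[OF g v]
      using inj_on_subset[OF S.inj_on_act[OF g] finsuppD(2)[OF v]] by (simp add: sum.reindex)
    also have "\<dots> = (\<Sum>x \<in> supp v. v x * F x (act' y (inv g)))"
      using finsuppD(2)[OF v] S.translate_act[OF _ g] kernel_act[OF _ g] True
      by (intro sum.cong) (auto simp: T.translate_def)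
    also have "\<dots> = T.translate g (kernel_apply F v) y"
      unfolding T.translate_def kernel_apply_def using True by simp
    finally show ?thesis .
  next
    case False
    have "F x y = 0" if "x \<in> supp (S.translate g v)" for x
      using finsupp_outside[OF kernel_finsupp False] finsuppD(2)[OF S.translate_finsupp[OF g v]] that
      by blast
    then show ?thesis
      unfolding kernel_apply_def T.translate_def using False by simp
  qed
qed

lemma orbit_sum_kernel_act:
  assumes K: "subgroup K H" and w: "w \<in> W" and k: "k \<in> K" and y: "y \<in> W'"
  shows "orbit_sum K act' (F (act w k)) y = orbit_sum K act' (F w) y"
proof -
  have "k \<in> carrier H"
    using k subgroup.subset[OF K] by blast
  then show ?thesis
    unfolding kernel_act[OF w \<open>k \<in> carrier H\<close>]
    using T.orbit_sum_translate_subgroup[OF K k kernel_finsupp[OF w] y] by simp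
qed

text \<open>Group the sum over \<open>supp v\<close> by \<open>K\<close>-orbits: by equivariance, the \<open>K\<close>-orbit sums of
  \<open>F w\<close> are constant on each of them.\<close>
lemma orbit_sum_kernel_apply_eq_0:
  assumes K: "subgroup K H" and v: "v \<in> finsupp W"
    and K_sums: "\<And>w. w \<in> W \<Longrightarrow> orbit_sum K act v w = 0" and y: "y \<in> W'"
  shows "orbit_sum K act' (kernel_apply F v) y = 0"
proof -
  define f where "f w = orbit_sum K act' (F w) y" for w
  let ?O = "right_orbit K act"
  have f_orbit: "f u = f w" if "w \<in> W" "u \<in> ?O w" for u w
    using that orbit_sum_kernel_act[OF K _ _ y] unfolding f_def right_orbit_def by blast
  have "orbit_sum K act' (kernel_apply F v) y = (\<Sum>w \<in> supp v. v w * f w)"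
    unfolding f_def using finsuppD(2)[OF v]
    by (intro orbit_sum_kernel_apply finsuppD(1)[OF v] finsuppD(1)[OF kernel_finsupp]) blast
  also have "\<dots> = (\<Sum>C \<in> ?O ` supp v. \<Sum>w \<in> {w \<in> supp v. ?O w = C}. v w * f w)"
    by (rule sum.image_gen[OF finsuppD(1)[OF v]])
  also have "\<dots> = 0"
  proof (rule sum.neutral, rule ballI)
    fix C
    assume "C \<in> ?O ` supp v"
    then obtain w0 where w0: "w0 \<in> supp v" "C = ?O w0"
      by blast
    have w0W: "w0 \<in> W"
      using w0(1) finsuppD(2)[OF v] by blast
    have "{w \<in> supp v. ?O w = C} = {w \<in> supp v. w \<in> ?O w0}"
      using S.right_orbit_eq[OF K w0W] S.right_orbit_self[OF K] finsuppD(2)[OF v] w0(2) by blast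
    then have "(\<Sum>w \<in> {w \<in> supp v. ?O w = C}. v w * f w) = (\<Sum>w \<in> {w \<in> supp v. w \<in> ?O w0}. v w * f w0)"
      using f_orbit[OF w0W] by (intro sum.cong) simp_all
    also have "\<dots> = orbit_sum K act v w0 * f w0"
      unfolding orbit_sum_def by (simp add: sum_distrib_right)
    also have "\<dots> = 0"
      using K_sums[OF w0W] by simp
    finally show "(\<Sum>w \<in> {w \<in> supp v. ?O w = C}. v w * f w) = 0" .
  qed
  finally show ?thesis .
qed

lemma orbit_sum_kernel_apply_cong:
  assumes K: "subgroup K H" and v: "v1 \<in> finsupp W" "v2 \<in> finsupp W"
    and eq: "\<And>w. w \<in> W \<Longrightarrow> orbit_sum K act v1 w = orbit_sum K act v2 w" and y: "y \<in> W'"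
  shows "orbit_sum K act' (kernel_apply F v1) y = orbit_sum K act' (kernel_apply F v2) y"
proof -
  have "orbit_sum K act (v1 - v2) w = 0" if "w \<in> W" for w
    unfolding orbit_sum_diff[OF finsuppD(1)[OF v(1)] finsuppD(1)[OF v(2)]] using eq[OF that] by simp
  then have "orbit_sum K act' (kernel_apply F (v1 - v2)) y = 0"
    by (rule orbit_sum_kernel_apply_eq_0[OF K finsupp_diff[OF v] _ y])
  then show ?thesis
    unfolding kernel_apply_diff[OF finsuppD(1)[OF v(1)] finsuppD(1)[OF v(2)]]
      orbit_sum_diff[OF finsuppD(1)[OF kernel_apply_finsupp[OF v(1)]]
        finsuppD(1)[OF kernel_apply_finsupp[OF v(2)]]]
    by simp
qed

lemma coinvariant_injective_trivial:
  assumes "coinvariant_injective {\<one>}" and v: "v \<in> finsupp W" and "kernel_apply F v = (\<lambda>_. 0)"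
  shows "v = (\<lambda>_. 0)"
proof
  fix w
  have "orbit_sum {\<one>} act' (kernel_apply F v) y = 0" for y
    using assms(3) by (simp add: orbit_sum_def supp_def)
  then have "orbit_sum {\<one>} act v w = 0" if "w \<in> W"
    using assms(1) v that unfolding coinvariant_injective_def by blast
  then show "v w = 0"
    using S.orbit_sum_trivial finsupp_outside[OF v] by (cases "w \<in> W") simp_all
qed

end

locale cyclic_quotient_kernel =
  equivariant_kernel H W act W' act' F + infinite_cyclic_quotient H K L \<phi>
  for H :: "('a, 'b) monoid_scheme" (structure) and W :: "'w set" and act
    and W' :: "'v set" and act' F K L \<phi>

sublocale cyclic_quotient_kernel \<subseteq> S: cyclic_quotient_action H W act K L \<phi> ..
sublocale cyclic_quotient_kernel \<subseteq> T: cyclic_quotient_action H W' act' K L \<phi> ..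

context cyclic_quotient_kernel
begin

lemma orbit_sum_kernel_apply_antidiff:
  assumes v: "v \<in> finsupp W" and L_sums: "\<And>w. w \<in> W \<Longrightarrow> orbit_sum L act v w = 0"
    and K_sums: "\<And>y. y \<in> W' \<Longrightarrow> orbit_sum K act' (kernel_apply F v) y = 0" and y: "y \<in> W'"
  shows "orbit_sum K act' (kernel_apply F (S.antidiff v)) y = 0"
proof -
  let ?t = "lift 1"
  define d where "d = S.antidiff v"
  have t: "?t \<in> carrier H"
    using L_carrier lift(1) by simp
  have d: "d \<in> finsupp W" "S.translate ?t d \<in> finsupp W"
    unfolding d_def using S.antidiff_finsupp[OF v L_sums] S.translate_finsupp[OF t] by simp_all
  have Fd: "kernel_apply F d \<in> finsupp W'" "T.translate ?t (kernel_apply F d) \<in> finsupp W'"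
    using kernel_apply_finsupp[OF d(1)] T.translate_finsupp[OF t] by simp_all
  have v_sums: "orbit_sum K act v w = orbit_sum K act (S.translate ?t d - d) w" if "w \<in> W" for w
    using S.orbit_sum_translate_antidiff[OF v L_sums that]
      orbit_sum_diff[OF finsuppD(1)[OF d(2)] finsuppD(1)[OF d(1)], of K act w]
    by (simp add: d_def)
  have "orbit_sum K act' (T.translate ?t (kernel_apply F d)) y' = orbit_sum K act' (kernel_apply F d) y'"
    if "y' \<in> W'" for y'
  proof -
    have "0 = orbit_sum K act' (kernel_apply F (S.translate ?t d - d)) y'"
      using orbit_sum_kernel_apply_cong[OF subgroup_K v finsupp_diff[OF d(2) d(1)] v_sums that]
        K_sums[OF that]
      by simp
    also have "\<dots> = orbit_sum K act' (T.translate ?t (kernel_apply F d)) y'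
        - orbit_sum K act' (kernel_apply F d) y'"
      unfolding kernel_apply_diff[OF finsuppD(1)[OF d(2)] finsuppD(1)[OF d(1)]]
        kernel_apply_translate[OF d(1) t]
      by (rule orbit_sum_diff[OF finsuppD(1)[OF Fd(2)] finsuppD(1)[OF Fd(1)]])
    finally show ?thesis
      by simp
  qed
  then show ?thesis
    unfolding d_def[symmetric] by (rule T.translate_invariant_orbit_sum_eq_0[OF Fd(1) _ y])
qed

lemma coinvariant_injective_descends:
  assumes L_inj: "coinvariant_injective L"
  shows "coinvariant_injective K"
  unfolding coinvariant_injective_def
proof (rule ballI, rule impI)
  fix v
  assume "v \<in> finsupp W" "\<forall>y \<in> W'. orbit_sum K act' (kernel_apply F v) y = 0"
  then show "\<forall>w \<in> W. orbit_sum K act v w = 0"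
  proof (induction "card (S.height_span v)" arbitrary: v rule: less_induct)
    case less
    note v = less.prems(1)
    show ?case
    proof (cases "supp v = {}")
      case True
      then show ?thesis
        by (simp add: orbit_sum_def)
    next
      case False
      have "\<forall>y \<in> W'. orbit_sum L act' (kernel_apply F v) y = 0"
        using T.orbit_sum_L_eq_0[OF kernel_apply_finsupp[OF v]] less.prems(2) by blast
      then have L_sums: "\<And>w. w \<in> W \<Longrightarrow> orbit_sum L act v w = 0"
        using L_inj v unfolding coinvariant_injective_def by blast
      have "\<forall>w \<in> W. orbit_sum K act (S.antidiff v) w = 0"
        using less.hyps[OF S.card_height_span_antidiff[OF v L_sums False] S.antidiff_finsupp[OF v L_sums]]
          orbit_sum_kernel_apply_antidiff[OF v L_sums] less.prems(2)
        by blast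
      then show ?thesis
        using S.orbit_sum_eq_0_of_antidiff[OF v L_sums] by blast
    qed
  qed
qed

end

lemma (in equivariant_kernel) coinvariant_injective_poly_Z:
  assumes "poly_Z H" and top: "coinvariant_injective (carrier H)"
  shows "coinvariant_injective {\<one>}"
proof -
  obtain k N where N: "N 0 = {\<one>}" "N k = carrier H" "\<forall>i \<le> k. subgroup (N i) H"
    "\<forall>i < k. N i \<subseteq> N (Suc i) \<and> normal (N i) (H\<lparr>carrier := N (Suc i)\<rparr>) \<and>
        (H\<lparr>carrier := N (Suc i)\<rparr> Mod N i) \<cong> integer_group"
    using assms(1) unfolding poly_Z_def by blast
  have "coinvariant_injective (N i)" if "i \<le> k" for i
    using that
  proof (induction rule: inc_induct)
    case base
    show ?case
      using N(2) top by simp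
  next
    case (step i)
    obtain \<phi> where "infinite_cyclic_quotient H (N i) (N (Suc i)) \<phi>"
      using infinite_cyclic_quotientI[OF is_group] N(3,4) step.hyps(2) by (meson Suc_leI)
    then interpret cyclic_quotient_kernel H W act W' act' F "N i" "N (Suc i)" \<phi>
      by intro_locales (simp_all add: infinite_cyclic_quotient_def)
    show ?case
      using coinvariant_injective_descends step.IH by blast
  qed
  then show ?thesis
    using N(1) by (metis le0)
qed

section \<open>Matrices over the integral group ring\<close>

definition index_mult :: "('a, 'b) monoid_scheme \<Rightarrow> nat \<times> 'a \<Rightarrow> 'a \<Rightarrow> nat \<times> 'a" where
  "index_mult G = (\<lambda>(j, x) h. (j, x \<otimes>\<^bsub>G\<^esub> h))"

text \<open>\<open>\<int>H\<^sup>n\<close> is \<open>\<int>[{..<n} \<times> H]\<close>, the pair \<open>(j, h)\<close> standing for \<open>h\<close> in the \<open>j\<close>-th coordinate. The matrix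
  \<open>A\<close> maps it to the \<open>j\<close>-th column of \<open>A\<close> multiplied by \<open>h\<close> from the right, whose coefficient
  at \<open>(i, x)\<close> is \<open>A i j (x h\<^sup>-\<^sup>1)\<close>.\<close>
definition matrix_kernel ::
    "('a, 'b) monoid_scheme \<Rightarrow> nat \<Rightarrow> (nat \<Rightarrow> nat \<Rightarrow> ('a \<Rightarrow> int)) \<Rightarrow> nat \<times> 'a \<Rightarrow> nat \<times> 'a \<Rightarrow> int" where
  "matrix_kernel G n A = (\<lambda>(j, h) (i, x).
      if i < n \<and> x \<in> carrier G \<and> h \<in> carrier G then A i j (x \<otimes>\<^bsub>G\<^esub> inv\<^bsub>G\<^esub> h) else 0)"

context group
begin

lemma right_free_action_index_mult: "right_free_action G ({..<n} \<times> carrier G) (index_mult G)"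
  by unfold_locales (auto simp: index_mult_def m_assoc)

lemma orbit_sum_index_mult:
  assumes v: "v \<in> finsupp ({..<n} \<times> carrier G)" and x: "x \<in> carrier G"
  shows "orbit_sum (carrier G) (index_mult G) v (j, x) = (\<Sum>u \<in> {u \<in> supp v. fst u = j}. v u)"
proof -
  have "right_orbit (carrier G) (index_mult G) (j, x) = {j} \<times> carrier G"
  proof (intro equalityI subsetI)
    fix z
    assume "z \<in> right_orbit (carrier G) (index_mult G) (j, x)"
    then show "z \<in> {j} \<times> carrier G"
      using x by (auto simp: right_orbit_def index_mult_def)
  next
    fix z
    assume "z \<in> {j} \<times> carrier G"
    then obtain y where y: "z = (j, y)" "y \<in> carrier G"
      by blast
    then have "z = index_mult G (j, x) (inv x \<otimes> y)"
      using x by (simp add: index_mult_def m_assoc[symmetric])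
    then show "z \<in> right_orbit (carrier G) (index_mult G) (j, x)"
      unfolding right_orbit_def using x y(2) by blast
  qed
  moreover have "supp v \<subseteq> {..<n} \<times> carrier G"
    using finsuppD(2)[OF v] .
  ultimately have "{u \<in> supp v. u \<in> right_orbit (carrier G) (index_mult G) (j, x)} = {u \<in> supp v. fst u = j}"
    by auto
  then show ?thesis
    unfolding orbit_sum_def by simp
qed

lemma gr_mult_eq_sum:
  assumes a: "a \<in> group_ring G" and b: "b \<in> group_ring G" and x: "x \<in> carrier G"
  shows "gr_mult G a b x = (\<Sum>h \<in> supp b. b h * a (x \<otimes> inv h))"
proof -
  have sa: "finite (supp a)" "supp a \<subseteq> carrier G" and sb: "supp b \<subseteq> carrier G"
    using finsuppD a b unfolding group_ring_eq_finsupp by blast+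
  have "gr_mult G a b x = (\<Sum>(g, h) \<in> supp a \<times> supp b. if g \<otimes> h = x then a g * b h else 0)"
    unfolding gr_mult_def supp_def ..
  also have "\<dots> = (\<Sum>g \<in> supp a. \<Sum>h \<in> supp b. if g \<otimes> h = x then a g * b h else 0)"
    by (rule sum.cartesian_product[symmetric])
  also have "\<dots> = (\<Sum>h \<in> supp b. \<Sum>g \<in> supp a. if g \<otimes> h = x then a g * b h else 0)"
    by (rule sum.swap)
  also have "\<dots> = (\<Sum>h \<in> supp b. b h * a (x \<otimes> inv h))"
  proof (rule sum.cong[OF refl])
    fix h
    assume "h \<in> supp b"
    then have h: "h \<in> carrier G"
      using sb by blast
    have "(\<Sum>g \<in> supp a. if g \<otimes> h = x then a g * b h else 0)
        = (\<Sum>g \<in> supp a. if x \<otimes> inv h = g then a g * b h else 0)"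
    proof (rule sum.cong[OF refl])
      fix g
      assume "g \<in> supp a"
      then have "g \<in> carrier G"
        using sa(2) by blast
      then have "g \<otimes> h = x \<longleftrightarrow> x \<otimes> inv h = g"
        using inv_solve_right[OF _ x h, of g] by auto
      then show "(if g \<otimes> h = x then a g * b h else 0) = (if x \<otimes> inv h = g then a g * b h else 0)"
        by simp
    qed
    also have "\<dots> = b h * a (x \<otimes> inv h)"
      using sa(1) by (simp add: sum.delta supp_def)
    finally show "(\<Sum>g \<in> supp a. if g \<otimes> h = x then a g * b h else 0) = b h * a (x \<otimes> inv h)" .
  qed
  finally show ?thesis .
qed

lemma gr_mult_outside:
  assumes "a \<in> group_ring G" "b \<in> group_ring G" "x \<notin> carrier G"
  shows "gr_mult G a b x = 0"
  using assms unfolding gr_mult_def group_ring_def by (intro sum.neutral) auto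

lemma case_prod_finsupp:
  fixes n :: nat
  assumes v: "\<forall>j<n. v j \<in> group_ring G" and v_zero: "\<forall>j\<ge>n. v j = (\<lambda>_. 0)"
  shows "case_prod v \<in> finsupp ({..<n} \<times> carrier G)"
proof -
  let ?S = "SIGMA j:{..<n}. supp (v j)"
  have v_finsupp: "finite (supp (v j))" "supp (v j) \<subseteq> carrier G" if "j < n" for j
    using v that finsuppD unfolding group_ring_eq_finsupp by blast+
  have "supp (case_prod v) \<subseteq> ?S"
  proof
    fix p
    assume "p \<in> supp (case_prod v)"
    then obtain j h where p: "p = (j, h)" "v j h \<noteq> 0"
      by (cases p) (auto simp: supp_def)
    have "j < n"
    proof (rule ccontr)
      assume "\<not> j < n"
      then show False
        using p(2) v_zero by simp
    qed
    with p show "p \<in> ?S"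
      by (simp add: supp_def)
  qed
  moreover have "finite ?S" "?S \<subseteq> {..<n} \<times> carrier G"
    using v_finsupp by auto
  ultimately show ?thesis
    unfolding finsupp_def using finite_subset by blast
qed

end

locale group_ring_matrix = group G for G :: "('a, 'b) monoid_scheme" (structure) +
  fixes n :: nat and A :: "nat \<Rightarrow> nat \<Rightarrow> ('a \<Rightarrow> int)"
  assumes entries: "i < n \<Longrightarrow> j < n \<Longrightarrow> A i j \<in> group_ring G"
begin

lemma entries_finsupp: "i < n \<Longrightarrow> j < n \<Longrightarrow> finite (supp (A i j)) \<and> supp (A i j) \<subseteq> carrier G"
  using entries finsuppD unfolding group_ring_eq_finsupp by blast

lemma matrix_kernel_row:
  assumes "i < n" "j < n" "h \<in> carrier G"
  shows "{z \<in> supp (matrix_kernel G n A (j, h)). fst z = i} = (\<lambda>g. (i, g \<otimes> h)) ` supp (A i j)"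
proof (intro equalityI subsetI)
  fix z
  assume z: "z \<in> {z \<in> supp (matrix_kernel G n A (j, h)). fst z = i}"
  then obtain x where x: "z = (i, x)" "x \<in> carrier G" "A i j (x \<otimes> inv h) \<noteq> 0"
    using assms by (cases z) (auto simp: matrix_kernel_def supp_def split: if_splits)
  moreover have "x = (x \<otimes> inv h) \<otimes> h"
    using x(2) assms(3) by (simp add: m_assoc)
  ultimately show "z \<in> (\<lambda>g. (i, g \<otimes> h)) ` supp (A i j)"
    by (auto simp: supp_def intro!: image_eqI[where x = "x \<otimes> inv h"])
next
  fix z
  assume "z \<in> (\<lambda>g. (i, g \<otimes> h)) ` supp (A i j)"
  then obtain g where g: "g \<in> supp (A i j)" "z = (i, g \<otimes> h)"
    by blast
  have "g \<in> carrier G"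
    using g(1) entries_finsupp assms by blast
  then show "z \<in> {z \<in> supp (matrix_kernel G n A (j, h)). fst z = i}"
    using g assms by (simp add: matrix_kernel_def supp_def m_assoc)
qed

sublocale equivariant_kernel G "{..<n} \<times> carrier G" "index_mult G" "{..<n} \<times> carrier G"
  "index_mult G" "matrix_kernel G n A"
proof intro_locales
  show "right_free_action_axioms G ({..<n} \<times> carrier G) (index_mult G)"
    using right_free_action_index_mult by (simp add: right_free_action_def)
  show "equivariant_kernel_axioms G ({..<n} \<times> carrier G) (index_mult G) ({..<n} \<times> carrier G)
      (index_mult G) (matrix_kernel G n A)"
  proof
    fix w
    assume "w \<in> {..<n} \<times> carrier G"
    then obtain j h where jh: "w = (j, h)" "j < n" "h \<in> carrier G"
      by blast
    have "supp (matrix_kernel G n A w) = (\<Union>i<n. {z \<in> supp (matrix_kernel G n A (j, h)). fst z = i})"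
      using jh by (auto simp: matrix_kernel_def supp_def split: if_splits)
    also have "\<dots> = (\<Union>i<n. (\<lambda>g. (i, g \<otimes> h)) ` supp (A i j))"
      using matrix_kernel_row jh by simp
    finally have supp_eq: "supp (matrix_kernel G n A w) = (\<Union>i<n. (\<lambda>g. (i, g \<otimes> h)) ` supp (A i j))" .
    show "matrix_kernel G n A w \<in> finsupp ({..<n} \<times> carrier G)"
      unfolding finsupp_def mem_Collect_eq supp_eq using jh(2,3) entries_finsupp by auto
  next
    fix w y k
    assume "w \<in> {..<n} \<times> carrier G" "y \<in> {..<n} \<times> carrier G" and k: "k \<in> carrier G"
    then obtain j h i x where "w = (j, h)" "y = (i, x)" "h \<in> carrier G" "x \<in> carrier G"
      by blast
    moreover have "(x \<otimes> k) \<otimes> inv (h \<otimes> k) = x \<otimes> inv h" if "h \<in> carrier G" "x \<in> carrier G"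
      using that k by (simp add: inv_mult_group m_assoc[symmetric]) (simp add: m_assoc)
    ultimately show "matrix_kernel G n A (index_mult G w k) (index_mult G y k) = matrix_kernel G n A w y"
      using k by (simp add: index_mult_def matrix_kernel_def)
  qed
qed

lemma orbit_sum_matrix_kernel:
  assumes "i < n" "j < n" "h \<in> carrier G" "x \<in> carrier G"
  shows "orbit_sum (carrier G) (index_mult G) (matrix_kernel G n A (j, h)) (i, x) = augmentation (A i j)"
proof -
  have sA: "supp (A i j) \<subseteq> carrier G"
    using entries_finsupp assms(1,2) by blast
  have inj: "inj_on (\<lambda>g. (i, g \<otimes> h)) (supp (A i j))"
  proof (rule inj_onI)
    fix g g'
    assume "g \<in> supp (A i j)" "g' \<in> supp (A i j)" "(i, g \<otimes> h) = (i, g' \<otimes> h)"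
    then have "g \<in> carrier G" "g' \<in> carrier G" "g \<otimes> h = g' \<otimes> h"
      using sA by auto
    then show "g = g'"
      using assms(3) by simp
  qed
  have "orbit_sum (carrier G) (index_mult G) (matrix_kernel G n A (j, h)) (i, x)
      = (\<Sum>u \<in> (\<lambda>g. (i, g \<otimes> h)) ` supp (A i j). matrix_kernel G n A (j, h) u)"
    using orbit_sum_index_mult[OF kernel_finsupp assms(4)] matrix_kernel_row[OF assms(1-3)] assms(2,3)
    by simp
  also have "\<dots> = (\<Sum>g \<in> supp (A i j). A i j g)"
    using sA assms by (simp add: sum.reindex[OF inj] matrix_kernel_def m_assoc subset_iff)
  also have "\<dots> = augmentation (A i j)"
    by (simp add: augmentation_def supp_def)
  finally show ?thesis .
qed

lemma orbit_sum_kernel_apply_matrix: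
  assumes v: "v \<in> finsupp ({..<n} \<times> carrier G)" and "i < n" "x \<in> carrier G"
  shows "orbit_sum (carrier G) (index_mult G) (kernel_apply (matrix_kernel G n A) v) (i, x)
    = (\<Sum>j<n. augmentation (A i j) * (\<Sum>u \<in> {u \<in> supp v. fst u = j}. v u))"
proof -
  have sv: "supp v \<subseteq> {..<n} \<times> carrier G"
    using finsuppD(2)[OF v] .
  have "orbit_sum (carrier G) (index_mult G) (kernel_apply (matrix_kernel G n A) v) (i, x)
      = (\<Sum>u \<in> supp v. v u * orbit_sum (carrier G) (index_mult G) (matrix_kernel G n A u) (i, x))"
    by (rule orbit_sum_kernel_apply[OF finsuppD(1)[OF v] finsuppD(1)[OF kernel_finsupp]])
      (use sv in blast)
  also have "\<dots> = (\<Sum>u \<in> supp v. v u * augmentation (A i (fst u)))"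
  proof (rule sum.cong[OF refl])
    fix u
    assume "u \<in> supp v"
    then obtain j h where "u = (j, h)" "j < n" "h \<in> carrier G"
      using sv by blast
    then show "v u * orbit_sum (carrier G) (index_mult G) (matrix_kernel G n A u) (i, x)
        = v u * augmentation (A i (fst u))"
      using orbit_sum_matrix_kernel[OF assms(2) _ _ assms(3)] by simp
  qed
  also have "\<dots> = (\<Sum>j<n. \<Sum>u \<in> {u \<in> supp v. fst u = j}. v u * augmentation (A i (fst u)))"
    using sv by (intro sum.group[symmetric] finsuppD(1)[OF v]) auto
  also have "\<dots> = (\<Sum>j<n. augmentation (A i j) * (\<Sum>u \<in> {u \<in> supp v. fst u = j}. v u))"
    by (simp add: sum_distrib_left mult.commute)
  finally show ?thesis .
qed

lemma coinvariant_injective_augmentation: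
  assumes inj: "inj_on (int_mat_apply n (\<lambda>i j. augmentation (A i j))) {x. \<forall>j\<ge>n. x j = 0}"
  shows "coinvariant_injective (carrier G)"
  unfolding coinvariant_injective_def
proof (rule ballI, rule impI)
  let ?W = "{..<n} \<times> carrier G" and ?\<epsilon> = "\<lambda>i j. augmentation (A i j)"
  fix v
  assume v: "v \<in> finsupp ?W"
    and Fv: "\<forall>y \<in> ?W. orbit_sum (carrier G) (index_mult G) (kernel_apply (matrix_kernel G n A) v) y = 0"
  define e where "e j = (if j < n then \<Sum>u \<in> {u \<in> supp v. fst u = j}. v u else 0)" for j
  have "int_mat_apply n ?\<epsilon> e i = int_mat_apply n ?\<epsilon> (\<lambda>_. 0) i" for i
  proof (cases "i < n")
    case True
    have "(\<Sum>j<n. ?\<epsilon> i j * e j) = (\<Sum>j<n. ?\<epsilon> i j * (\<Sum>u \<in> {u \<in> supp v. fst u = j}. v u))"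
      by (intro sum.cong) (simp_all add: e_def)
    also have "\<dots> = 0"
      using Fv[rule_format, of "(i, \<one>)"] orbit_sum_kernel_apply_matrix[OF v True one_closed] True
      by simp
    finally show ?thesis
      by (simp add: int_mat_apply_def)
  qed (simp add: int_mat_apply_def)
  then have "int_mat_apply n ?\<epsilon> e = int_mat_apply n ?\<epsilon> (\<lambda>_. 0)"
    by (rule ext)
  then have "e = (\<lambda>_. 0)"
    by (rule inj_onD[OF inj]) (auto simp: e_def)
  show "\<forall>w \<in> ?W. orbit_sum (carrier G) (index_mult G) v w = 0"
  proof
    fix w
    assume "w \<in> ?W"
    then obtain j x where "w = (j, x)" "j < n" "x \<in> carrier G"
      by blast
    moreover have "e j = 0"
      using \<open>e = (\<lambda>_. 0)\<close> by simp
    ultimately show "orbit_sum (carrier G) (index_mult G) v w = 0"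
      using orbit_sum_index_mult[OF v] by (simp add: e_def)
  qed
qed

lemma gr_mat_apply_eq_kernel_apply:
  assumes v: "\<forall>j<n. v j \<in> group_ring G" and v_zero: "\<forall>j\<ge>n. v j = (\<lambda>_. 0)"
  shows "gr_mat_apply G n A v = curry (kernel_apply (matrix_kernel G n A) (case_prod v))"
proof (intro ext)
  fix i x
  have v_finsupp: "finite (supp (v j))" "supp (v j) \<subseteq> carrier G" if "j < n" for j
    using v that finsuppD unfolding group_ring_eq_finsupp by blast+
  have "kernel_apply (matrix_kernel G n A) (case_prod v) (i, x)
      = (\<Sum>(j, h) \<in> (SIGMA j:{..<n}. supp (v j)). v j h * matrix_kernel G n A (j, h) (i, x))"
    using v_finsupp v_zero
    by (subst kernel_apply_superset[of "SIGMA j:{..<n}. supp (v j)"])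
      (auto simp: supp_def not_less[symmetric] split_def)
  also have "\<dots> = (\<Sum>j<n. \<Sum>h \<in> supp (v j). v j h * matrix_kernel G n A (j, h) (i, x))"
    using v_finsupp by (subst sum.Sigma) auto
  also have "\<dots> = gr_mat_apply G n A v i x"
  proof (cases "i < n \<and> x \<in> carrier G")
    case True
    have "(\<Sum>h \<in> supp (v j). v j h * matrix_kernel G n A (j, h) (i, x)) = gr_mult G (A i j) (v j) x"
      if "j < n" for j
      using gr_mult_eq_sum[OF entries v[rule_format], of i j j x] v_finsupp[OF that] True that
      by (auto simp: matrix_kernel_def intro!: sum.cong)
    then show ?thesis
      unfolding gr_mat_apply_def using True by simp
  next
    case False
    then show ?thesis
      using gr_mult_outside[OF entries v[rule_format]] by (auto simp: gr_mat_apply_def matrix_kernel_def)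
  qed
  finally show "gr_mat_apply G n A v i x = curry (kernel_apply (matrix_kernel G n A) (case_prod v)) i x"
    by simp
qed

lemma inj_on_gr_mat_apply:
  assumes inj: "coinvariant_injective {\<one>}"
  shows "inj_on (gr_mat_apply G n A) {v. (\<forall>j<n. v j \<in> group_ring G) \<and> (\<forall>j\<ge>n. v j = (\<lambda>_. 0))}"
proof (rule inj_onI)
  fix v1 v2
  assume "v1 \<in> {v. (\<forall>j<n. v j \<in> group_ring G) \<and> (\<forall>j\<ge>n. v j = (\<lambda>_. 0))}"
    and "v2 \<in> {v. (\<forall>j<n. v j \<in> group_ring G) \<and> (\<forall>j\<ge>n. v j = (\<lambda>_. 0))}"
    and eq: "gr_mat_apply G n A v1 = gr_mat_apply G n A v2"
  then have v: "case_prod v1 \<in> finsupp ({..<n} \<times> carrier G)" "case_prod v2 \<in> finsupp ({..<n} \<times> carrier G)"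
    and "curry (kernel_apply (matrix_kernel G n A) (case_prod v1))
      = curry (kernel_apply (matrix_kernel G n A) (case_prod v2))"
    using case_prod_finsupp gr_mat_apply_eq_kernel_apply by auto
  then have "kernel_apply (matrix_kernel G n A) (case_prod v1)
      = kernel_apply (matrix_kernel G n A) (case_prod v2)"
    by (metis case_prod_curry)
  then have "kernel_apply (matrix_kernel G n A) (case_prod v1 - case_prod v2) = (\<lambda>_. 0)"
    unfolding kernel_apply_diff[OF finsuppD(1)[OF v(1)] finsuppD(1)[OF v(2)]] by (simp add: fun_eq_iff)
  then have "case_prod v1 - case_prod v2 = (\<lambda>_. 0)"
    by (rule coinvariant_injective_trivial[OF inj finsupp_diff[OF v]])
  then show "v1 = v2"
    by (auto simp: fun_eq_iff)
qed

end

theorem mainTheorem14: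
  fixes H :: "('a, 'b) monoid_scheme"
    and n :: nat
    and A :: "nat \<Rightarrow> nat \<Rightarrow> ('a \<Rightarrow> int)"
  assumes "group H"
    and "poly_Z H"
    and "\<forall>i<n. \<forall>j<n. A i j \<in> group_ring H"
    and "inj_on (int_mat_apply n (\<lambda>i j. augmentation (A i j))) {x. \<forall>j\<ge>n. x j = 0}"
  shows "inj_on (gr_mat_apply H n A) {v. (\<forall>j<n. v j \<in> group_ring H) \<and> (\<forall>j\<ge>n. v j = (\<lambda>_. 0))}"
proof -
  interpret group_ring_matrix H n A
    using assms(1,3) by (simp add: group_ring_matrix_def group_ring_matrix_axioms_def)
  have "coinvariant_injective (carrier H)"
    using coinvariant_injective_augmentation[OF assms(4)] .
  then have "coinvariant_injective {\<one>\<^bsub>H\<^esub>}"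
    by (rule coinvariant_injective_poly_Z[OF assms(2)])
  then show ?thesis
    by (rule inj_on_gr_mat_apply)
qed

end
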